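(* Let $m,n$ be positive integers and $\mathbf a,\mathbf b\in\mathbb Z^{m+n-2}$. If $\mathbf a\succeq\mathbf b$, then $p_{A^{m,n}}(\mathbf a)\ge p_{A^{m,n}}(\mathbf b)$.
   Context: $\mathbf u\succeq\mathbf v$ means $u_i\ge v_i$ for every coordinate $i$. Vector partition function: for a $d\times r$ integer matrix $A$ with $\ker A\cap\mathbb R^r_{\ge0}=\{0\}$, $p_A(\mathbf b)=\#\{\mathbf x\in\mathbb Z^r_{\ge0}:A\mathbf x=\mathbf b\}$. Variables $s_0,\dots,s_{m-1},t_1,\dots,t_{n-2}$; $T=t_1\cdots t_{n-2}$; $x_i=s_1\cdots s_iT^i$ ($1\le i\le m-1$), $y_j=s_0s_1\cdots s_{m-1}T^{m-1}t_1\cdots t_{j-1}$ ($1\le j\le n-1$); $e(M)\in\mathbb Z^{m+n-2}$ is the exponent vector of a Laurent monomial $M$ (coordinates $s_0,\dots,s_{m-1},t_1,\dots,t_{n-2}$). $A^{m,n}$ is the $(m+n-2)\times(\binom{mn}2-\binom m2-\binom n2)$ matrix whose columns are the exponent vectors of the following monomials, with multiplicity: $y_j/x_i$ and $x_iy_j$; $x_i$ ($n-1$ times each); $y_j$ ($m-1$ times each); $x_iy_j/x_k$ ($i\ne k$); $x_iy_j/y_k$ ($j\ne k$); $x_ky_l/(x_iy_j)$ ($i<k$, $j\ne l$); $x_k/x_i$ ($i<k$, $n-1$ times each); $y_l/y_j$ ($j<l$, $m-1$ times each); here $i,k\in\{1,\dots,m-1\}$ and $j,l\in\{1,\dots,n-1\}$.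 *)

theory Defs
  imports Main
begin

text \<open>A matrix with d rows and r columns is given as the
list of its r columns, each an int list of length d.\<close>

definition vpf :: "int list list \<Rightarrow> int list \<Rightarrow> nat" where
  "vpf cols b = card {x :: nat list. length x = length cols \<and>
      (\<forall>c < length b. (\<Sum>k < length cols. int (x ! k) * (cols ! k ! c)) = b ! c)}"

text \<open>Coordinates of exponent vectors (for m, n >= 2), indexed 0 .. m+n-3:
coordinate c < m is s_c (c = 0..m-1); coordinate m + (j-1) is t_j (j = 1..n-2).
Exponent vectors of Laurent monomials are represented as functions nat => int.\<close>

definition T_exp :: "nat \<Rightarrow> nat \<Rightarrow> nat \<Rightarrow> int" where
  "T_exp m n = (\<lambda>c. if m \<le> c \<and> c < m + n - 2 then 1 else 0)"

text \<open>x_i = s_1 ... s_i T^i\<close>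
definition x_exp :: "nat \<Rightarrow> nat \<Rightarrow> nat \<Rightarrow> nat \<Rightarrow> int" where
  "x_exp m n i = (\<lambda>c. (if 1 \<le> c \<and> c \<le> i then 1 else 0) + int i * T_exp m n c)"

text \<open>y_j = s_0 s_1 ... s_{m-1} T^{m-1} t_1 ... t_{j-1}\<close>
definition y_exp :: "nat \<Rightarrow> nat \<Rightarrow> nat \<Rightarrow> nat \<Rightarrow> int" where
  "y_exp m n j = (\<lambda>c. (if c < m then 1 else 0) + int (m - 1) * T_exp m n c
                      + (if m \<le> c \<and> c < m + j - 1 then 1 else 0))"

definition eadd :: "(nat \<Rightarrow> int) \<Rightarrow> (nat \<Rightarrow> int) \<Rightarrow> nat \<Rightarrow> int" where
  "eadd u v = (\<lambda>c. u c + v c)"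

definition esub :: "(nat \<Rightarrow> int) \<Rightarrow> (nat \<Rightarrow> int) \<Rightarrow> nat \<Rightarrow> int" where
  "esub u v = (\<lambda>c. u c - v c)"

definition Acols_exp :: "nat \<Rightarrow> nat \<Rightarrow> (nat \<Rightarrow> int) list" where
  "Acols_exp m n = (let X = x_exp m n; Y = y_exp m n; I = [1..<m]; J = [1..<n] in
       [esub (Y j) (X i). i \<leftarrow> I, j \<leftarrow> J]
     @ [eadd (X i) (Y j). i \<leftarrow> I, j \<leftarrow> J]
     @ concat [replicate (n - 1) (X i). i \<leftarrow> I]
     @ concat [replicate (m - 1) (Y j). j \<leftarrow> J]
     @ [esub (eadd (X i) (Y j)) (X k). i \<leftarrow> I, j \<leftarrow> J, k \<leftarrow> I, i \<noteq> k]
     @ [esub (eadd (X i) (Y j)) (Y k). i \<leftarrow> I, j \<leftarrow> J, k \<leftarrow> J, j \<noteq> k]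
     @ [esub (eadd (X k) (Y l)) (eadd (X i) (Y j)). i \<leftarrow> I, k \<leftarrow> I, j \<leftarrow> J, l \<leftarrow> J, i < k, j \<noteq> l]
     @ concat [replicate (n - 1) (esub (X k) (X i)). i \<leftarrow> I, k \<leftarrow> I, i < k]
     @ concat [replicate (m - 1) (esub (Y l) (Y j)). j \<leftarrow> J, l \<leftarrow> J, j < l])"

definition A_mn :: "nat \<Rightarrow> nat \<Rightarrow> int list list" where
  "A_mn m n = map (\<lambda>v. map v [0..<m + n - 2]) (Acols_exp m n)"

end

theory Submission
  imports Defs
begin

(* If column k of A is the unit vector e_c, then x |-> x + e_k maps the solutions of A x = b
   injectively to those of A x = b + e_c. Hence p_A is monotone as soon as every unit vector is a
   column of A and all solution sets are finite; finiteness follows from a weight vector pairing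
   to at least 1 with every column. For A^{m,n} the unit vectors are the columns
   s_0 = y_1/x_(m-1), t_j = y_(j+1)/y_j and s_k = x_k y_1/(x_(k-1) y_(n-1)), reading x_0 = 1 and
   y_1/y_(n-1) = 1 when n = 2; a weight giving x_i the value 2ni and y_j the value 2nm + j is
   positive on all columns. *)

definition vpf_solutions :: "int list list \<Rightarrow> int list \<Rightarrow> nat list set" where
  "vpf_solutions cols b = {x. length x = length cols \<and>
      (\<forall>c < length b. (\<Sum>k < length cols. int (x ! k) * (cols ! k ! c)) = b ! c)}"

lemma vpf_eq_card: "vpf cols b = card (vpf_solutions cols b)"
  by (simp add: vpf_def vpf_solutions_def)

lemma vpf_solutions_weighted_sum:
  assumes "x \<in> vpf_solutions cols b"
  shows "(\<Sum>c<length b. W c * b ! c) =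
         (\<Sum>k<length cols. int (x ! k) * (\<Sum>c<length b. W c * cols ! k ! c))"
proof -
  have "(\<Sum>c<length b. W c * b ! c) =
        (\<Sum>c<length b. W c * (\<Sum>k<length cols. int (x ! k) * cols ! k ! c))"
    using assms by (simp add: vpf_solutions_def)
  also have "\<dots> = (\<Sum>k<length cols. int (x ! k) * (\<Sum>c<length b. W c * cols ! k ! c))"
    unfolding sum_distrib_left by (subst sum.swap) (simp add: algebra_simps)
  finally show ?thesis .
qed

lemma finite_vpf_solutions:
  assumes pointed: "\<forall>k<length cols. (\<Sum>c<length b. W c * cols ! k ! c) \<ge> 1"
  shows "finite (vpf_solutions cols b)"
proof -
  define B where "B = nat (\<Sum>c<length b. W c * b ! c)"
  have bound: "x ! k \<le> B" if x: "x \<in> vpf_solutions cols b" and k: "k < length cols" for x k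
  proof -
    have "int (x ! k) \<le> int (x ! k) * (\<Sum>c<length b. W c * cols ! k ! c)"
      using pointed k by (simp add: mult_le_cancel_left1)
    also have "\<dots> \<le> (\<Sum>k<length cols. int (x ! k) * (\<Sum>c<length b. W c * cols ! k ! c))"
      using pointed k by (intro member_le_sum) (auto intro: order_trans[OF zero_le_one])
    also have "\<dots> = (\<Sum>c<length b. W c * b ! c)"
      using vpf_solutions_weighted_sum[OF x] by simp
    finally show ?thesis unfolding B_def by linarith
  qed
  have "vpf_solutions cols b \<subseteq> {x. set x \<subseteq> {0..B} \<and> length x = length cols}"
    using bound by (auto simp: vpf_solutions_def in_set_conv_nth)
  then show ?thesis
    by (rule finite_subset) (simp add: finite_lists_length_eq)
qed

lemma vpf_le_vpf_add_unit_column: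
  assumes fin: "finite (vpf_solutions cols (b[c := b ! c + 1]))"
    and c: "c < length b" and k: "k < length cols"
    and unit: "\<forall>c'<length b. cols ! k ! c' = (if c' = c then 1 else 0)"
  shows "vpf cols b \<le> vpf cols (b[c := b ! c + 1])"
proof -
  let ?incr = "\<lambda>x::nat list. x[k := x ! k + 1]"
  have "?incr ` vpf_solutions cols b \<subseteq> vpf_solutions cols (b[c := b ! c + 1])"
  proof
    fix y assume "y \<in> ?incr ` vpf_solutions cols b"
    then obtain x where x: "x \<in> vpf_solutions cols b" and y: "y = ?incr x" by blast
    have len: "length x = length cols" using x by (simp add: vpf_solutions_def)
    have "(\<Sum>j<length cols. int (y ! j) * cols ! j ! c') = b[c := b ! c + 1] ! c'"
      if c': "c' < length b" for c'
    proof -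
      have "(\<Sum>j<length cols. int (y ! j) * cols ! j ! c') =
            (\<Sum>j<length cols. int (x ! j) * cols ! j ! c' + (if j = k then cols ! j ! c' else 0))"
        by (rule sum.cong) (auto simp: y len nth_list_update algebra_simps)
      also have "\<dots> = (\<Sum>j<length cols. int (x ! j) * cols ! j ! c') + cols ! k ! c'"
        using k by (simp add: sum.distrib)
      also have "\<dots> = b ! c' + cols ! k ! c'"
        using x c' by (simp add: vpf_solutions_def)
      also have "\<dots> = b[c := b ! c + 1] ! c'"
        using unit c' c by (simp add: nth_list_update)
      finally show ?thesis .
    qed
    then show "y \<in> vpf_solutions cols (b[c := b ! c + 1])"
      using len by (simp add: vpf_solutions_def y)
  qed
  moreover have "inj ?incr"
  proof (rule injI)
    fix x x' :: "nat list" assume eq: "?incr x = ?incr x'"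
    then have len: "length x = length x'" by (metis length_list_update)
    show "x = x'"
    proof (rule nth_equalityI)
      fix i assume "i < length x"
      have "?incr x ! i = ?incr x' ! i" using eq by simp
      then show "x ! i = x' ! i" using \<open>i < length x\<close> len by (cases "i = k") auto
    qed (rule len)
  qed
  ultimately show ?thesis
    unfolding vpf_eq_card by (intro card_inj_on_le[OF _ _ fin]) (auto intro: inj_on_subset)
qed

lemma vpf_mono:
  assumes pointed: "\<forall>k<length cols. (\<Sum>c<d. W c * cols ! k ! c) \<ge> 1"
    and units: "\<forall>c<d. \<exists>k<length cols. \<forall>c'<d. cols ! k ! c' = (if c' = c then 1 else 0)"
    and len: "length a = d" "length b = d" and le: "\<forall>c<d. b ! c \<le> a ! c"
  shows "vpf cols b \<le> vpf cols a"
  using len(2) le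
proof (induction "\<Sum>c<d. nat (a ! c - b ! c)" arbitrary: b rule: less_induct)
  case less
  show ?case
  proof (cases "b = a")
    case False
    then obtain c where c: "c < d" "b ! c < a ! c"
      using less.prems len(1) by (metis nth_equalityI order_le_less)
    define b' where "b' = b[c := b ! c + 1]"
    have "(\<Sum>c<d. nat (a ! c - b' ! c)) < (\<Sum>c<d. nat (a ! c - b ! c))"
    proof (rule sum_strict_mono_ex1)
      show "\<forall>c'\<in>{..<d}. nat (a ! c' - b' ! c') \<le> nat (a ! c' - b ! c')"
        using less.prems c by (auto simp: b'_def nth_list_update)
      show "\<exists>c'\<in>{..<d}. nat (a ! c' - b' ! c') < nat (a ! c' - b ! c')"
        using c less.prems by (intro bexI[of _ c]) (auto simp: b'_def)
    qed simp
    moreover have "length b' = d" "\<forall>c<d. b' ! c \<le> a ! c"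
      using less.prems c by (auto simp: b'_def nth_list_update)
    ultimately have "vpf cols b' \<le> vpf cols a"
      by (rule less.hyps)
    moreover obtain k where "k < length cols" "\<forall>c'<d. cols ! k ! c' = (if c' = c then 1 else 0)"
      using units c(1) by blast
    then have "vpf cols b \<le> vpf cols b'"
      unfolding b'_def using less.prems(1) c(1) pointed \<open>length b' = d\<close>
      by (intro vpf_le_vpf_add_unit_column finite_vpf_solutions) (auto simp: b'_def)
    ultimately show ?thesis by linarith
  qed simp
qed

definition unit_exp :: "nat \<Rightarrow> nat \<Rightarrow> int" where
  "unit_exp c = (\<lambda>c'. if c' = c then 1 else 0)"

definition weight :: "nat \<Rightarrow> nat \<Rightarrow> nat \<Rightarrow> int" where
  "weight m n c = (if c = 0 then 2 * int n + 1 else if c < m then int n + 2 else 1)"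

definition weighted :: "nat \<Rightarrow> nat \<Rightarrow> (nat \<Rightarrow> int) \<Rightarrow> int" where
  "weighted m n v = (\<Sum>c<m + n - 2. weight m n c * v c)"

lemma weighted_add: "weighted m n (\<lambda>c. u c + v c) = weighted m n u + weighted m n v"
  by (simp add: weighted_def algebra_simps sum.distrib)

lemma weighted_scale: "weighted m n (\<lambda>c. k * v c) = k * weighted m n v"
  by (simp add: weighted_def sum_distrib_left algebra_simps)

lemma weighted_eadd: "weighted m n (eadd u v) = weighted m n u + weighted m n v"
  by (simp add: eadd_def weighted_add)

lemma weighted_esub: "weighted m n (esub u v) = weighted m n u - weighted m n v"
  by (simp add: weighted_def esub_def algebra_simps sum_subtractf)

lemma weighted_indicator:
  "weighted m n (\<lambda>c. if P c then 1 else 0) = sum (weight m n) {c. c < m + n - 2 \<and> P c}"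
proof -
  have "weighted m n (\<lambda>c. if P c then 1 else 0) =
        (\<Sum>c<m + n - 2. if P c then weight m n c else 0)"
    unfolding weighted_def by (rule sum.cong) auto
  also have "\<dots> = sum (weight m n) {c \<in> {..<m + n - 2}. P c}"
    by (rule sum.inter_filter[symmetric]) simp
  finally show ?thesis by simp
qed

lemma sum_weight_s_range: "i < m \<Longrightarrow> sum (weight m n) {1..i} = int i * (int n + 2)"
  by (simp add: weight_def)

lemma sum_weight_t_range: "0 < m \<Longrightarrow> sum (weight m n) {m..<m + k} = int k"
  by (simp add: weight_def)

context
  fixes m n :: nat
  assumes m2: "m \<ge> 2" and n2: "n \<ge> 2"
begin

lemma weighted_T: "weighted m n (T_exp m n) = int n - 2"
proof -
  have "{c. c < m + n - 2 \<and> m \<le> c \<and> c < m + n - 2} = {m..<m + (n - 2)}"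
    using n2 by auto
  then show ?thesis
    using sum_weight_t_range[of m n "n - 2"] m2 n2 unfolding T_exp_def weighted_indicator by simp
qed

lemma weighted_x:
  assumes "1 \<le> i" "i < m" shows "weighted m n (x_exp m n i) = 2 * int n * int i"
proof -
  have "{c. c < m + n - 2 \<and> 1 \<le> c \<and> c \<le> i} = {1..i}"
    using assms n2 by auto
  then have "weighted m n (\<lambda>c. if 1 \<le> c \<and> c \<le> i then 1 else 0) = int i * (int n + 2)"
    using sum_weight_s_range[of i m n] assms unfolding weighted_indicator by simp
  then show ?thesis
    unfolding x_exp_def weighted_add weighted_scale weighted_T by (simp add: algebra_simps)
qed

lemma weighted_y:
  assumes "1 \<le> j" "j < n" shows "weighted m n (y_exp m n j) = 2 * int n * int m + int j"
proof -
  have "{c. c < m + n - 2 \<and> c < m} = insert 0 {1..m - 1}"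
    using m2 n2 by auto
  then have "weighted m n (\<lambda>c. if c < m then 1 else 0) = 2 * int n + 1 + int (m - 1) * (int n + 2)"
    using sum_weight_s_range[of "m - 1" m n] m2 unfolding weighted_indicator by (simp add: weight_def)
  moreover have "{c. c < m + n - 2 \<and> m \<le> c \<and> c < m + j - 1} = {m..<m + (j - 1)}"
    using assms by auto
  then have "weighted m n (\<lambda>c. if m \<le> c \<and> c < m + j - 1 then 1 else 0) = int j - 1"
    using sum_weight_t_range[of m n "j - 1"] assms m2 unfolding weighted_indicator by simp
  ultimately show ?thesis
    using m2 unfolding y_exp_def weighted_add weighted_scale weighted_T
    by (simp add: algebra_simps)
qed

lemma weighted_column_pos:
  assumes "v \<in> set (Acols_exp m n)" shows "weighted m n v \<ge> 1"
proof -
  have gap: "2 * int n * int i + 2 * int n \<le> 2 * int n * int k" if "i < k" for i k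
  proof -
    have "2 * int n * (int i + 1) \<le> 2 * int n * int k"
      using that by (intro mult_left_mono) auto
    then show ?thesis by (simp add: distrib_left)
  qed
  have x_pos: "2 * int n \<le> weighted m n (x_exp m n i)" if "1 \<le> i" "i < m" for i
    using gap[of 0 i] that by (simp add: weighted_x)
  have x_gap: "weighted m n (x_exp m n i) + 2 * int n \<le> weighted m n (x_exp m n k)"
    if "1 \<le> i" "i < k" "k < m" for i k
    using gap[of i k] that by (simp add: weighted_x)
  have x_lt_y: "weighted m n (x_exp m n i) + 2 * int n < weighted m n (y_exp m n j)"
    if "1 \<le> i" "i < m" "1 \<le> j" "j < n" for i j
    using gap[of i m] that by (simp add: weighted_x weighted_y)
  have y_diff: "weighted m n (y_exp m n l) - weighted m n (y_exp m n j) = int l - int j"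
    if "1 \<le> j" "j < n" "1 \<le> l" "l < n" for j l
    using that by (simp add: weighted_y)
  from assms show ?thesis
    unfolding Acols_exp_def Let_def
    apply (auto simp: weighted_esub weighted_eadd split: if_splits)
    \<comment> \<open>one goal per family of columns, in the order of Acols_exp_def\<close>
    subgoal for i j using x_lt_y[of i j] by linarith
    subgoal for i j using x_lt_y[of i j] x_pos[of i] by linarith
    subgoal for i using x_pos[of i] by linarith
    subgoal for j using x_lt_y[of 1 j] x_pos[of 1] m2 by linarith
    subgoal for i j k using x_lt_y[of k j] x_pos[of i] by linarith
    subgoal for i j l using x_pos[of i] y_diff[of l j] by linarith
    subgoal for i k j l using x_gap[of i k] y_diff[of j l] by linarith
    subgoal for i k using x_gap[of i k] by linarith
    subgoal for j l using y_diff[of j l] by linarith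
    done
qed

lemmas exp_defs = unit_exp_def esub_def eadd_def x_exp_def y_exp_def T_exp_def

lemma unit_s0_in_Acols_exp: "unit_exp 0 \<in> set (Acols_exp m n)"
proof -
  have "esub (y_exp m n 1) (x_exp m n (m - 1)) \<in>
        set [esub (y_exp m n j) (x_exp m n i). i \<leftarrow> [1..<m], j \<leftarrow> [1..<n]]"
    using m2 n2 by force
  moreover have "esub (y_exp m n 1) (x_exp m n (m - 1)) = unit_exp 0"
    using m2 n2 by (auto simp: fun_eq_iff exp_defs)
  ultimately show ?thesis
    unfolding Acols_exp_def Let_def set_append by auto
qed

lemma unit_t_in_Acols_exp:
  assumes "m \<le> c" "c < m + n - 2" shows "unit_exp c \<in> set (Acols_exp m n)"
proof -
  define j where "j = c - m + 1"
  have j: "1 \<le> j" "j < n - 1" using assms by (auto simp: j_def)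
  have "esub (y_exp m n (j + 1)) (y_exp m n j) \<in>
        set (concat [replicate (m - 1) (esub (y_exp m n l) (y_exp m n j)).
                     j \<leftarrow> [1..<n], l \<leftarrow> [1..<n], j < l])"
    using m2 j by force
  moreover have "esub (y_exp m n (j + 1)) (y_exp m n j) = unit_exp c"
    using assms m2 j by (auto simp: fun_eq_iff exp_defs j_def)
  ultimately show ?thesis
    unfolding Acols_exp_def Let_def set_append by auto
qed

lemma unit_s_in_Acols_exp:
  assumes k: "1 \<le> k" "k < m" shows "unit_exp k \<in> set (Acols_exp m n)"
proof -
  consider "k = 1" "n = 2" | "2 \<le> k" "n = 2" | "k = 1" "3 \<le> n" | "2 \<le> k" "3 \<le> n"
    using k n2 by linarith
  then show ?thesis
  proof cases
    case 1
    have "x_exp m n 1 \<in> set (concat [replicate (n - 1) (x_exp m n i). i \<leftarrow> [1..<m]])"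
      using m2 1 by force
    moreover have "x_exp m n 1 = unit_exp k"
      using 1 by (auto simp: fun_eq_iff exp_defs)
    ultimately show ?thesis
      unfolding Acols_exp_def Let_def set_append by auto
  next
    case 2
    have "esub (x_exp m n k) (x_exp m n (k - 1)) \<in> set (concat [replicate (n - 1)
            (esub (x_exp m n k) (x_exp m n i)). i \<leftarrow> [1..<m], k \<leftarrow> [1..<m], i < k])"
      using k 2 by force
    moreover have "esub (x_exp m n k) (x_exp m n (k - 1)) = unit_exp k"
      using 2 by (auto simp: fun_eq_iff exp_defs)
    ultimately show ?thesis
      unfolding Acols_exp_def Let_def set_append by auto
  next
    case 3
    have "esub (eadd (x_exp m n 1) (y_exp m n 1)) (y_exp m n (n - 1)) \<in>
          set [esub (eadd (x_exp m n i) (y_exp m n j)) (y_exp m n k).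
               i \<leftarrow> [1..<m], j \<leftarrow> [1..<n], k \<leftarrow> [1..<n], j \<noteq> k]"
      by (simp, rule bexI[of _ 1], rule bexI[of _ 1], rule bexI[of _ "n - 1"])
        (use m2 3 in auto)
    moreover have "esub (eadd (x_exp m n 1) (y_exp m n 1)) (y_exp m n (n - 1)) = unit_exp k"
      using m2 3 by (auto simp: fun_eq_iff exp_defs)
    ultimately show ?thesis
      unfolding Acols_exp_def Let_def set_append by auto
  next
    case 4
    have "esub (eadd (x_exp m n k) (y_exp m n 1)) (eadd (x_exp m n (k - 1)) (y_exp m n (n - 1))) \<in>
          set [esub (eadd (x_exp m n k) (y_exp m n l)) (eadd (x_exp m n i) (y_exp m n j)).
               i \<leftarrow> [1..<m], k \<leftarrow> [1..<m], j \<leftarrow> [1..<n], l \<leftarrow> [1..<n], i < k, j \<noteq> l]"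
      by (simp, rule bexI[of _ "k - 1"], rule bexI[of _ k], intro conjI impI,
          rule bexI[of _ "n - 1"], rule bexI[of _ 1]) (use k 4 in auto)
    moreover have "esub (eadd (x_exp m n k) (y_exp m n 1))
                    (eadd (x_exp m n (k - 1)) (y_exp m n (n - 1))) = unit_exp k"
      using m2 k 4 by (auto simp: fun_eq_iff exp_defs)
    ultimately show ?thesis
      unfolding Acols_exp_def Let_def set_append by auto
  qed
qed

lemma unit_in_Acols_exp: "c < m + n - 2 \<Longrightarrow> unit_exp c \<in> set (Acols_exp m n)"
  using unit_s0_in_Acols_exp unit_s_in_Acols_exp unit_t_in_Acols_exp
  by (metis less_one not_le_imp_less)

lemma A_mn_pointed:
  "\<forall>k<length (A_mn m n). (\<Sum>c<m + n - 2. weight m n c * A_mn m n ! k ! c) \<ge> 1"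
proof (intro allI impI)
  fix k assume k: "k < length (A_mn m n)"
  then have "(\<Sum>c<m + n - 2. weight m n c * A_mn m n ! k ! c) = weighted m n (Acols_exp m n ! k)"
    by (simp add: A_mn_def weighted_def)
  also have "\<dots> \<ge> 1"
    using k by (intro weighted_column_pos) (simp add: A_mn_def)
  finally show "(\<Sum>c<m + n - 2. weight m n c * A_mn m n ! k ! c) \<ge> 1" .
qed

lemma A_mn_unit_columns:
  "\<forall>c<m + n - 2. \<exists>k<length (A_mn m n). \<forall>c'<m + n - 2. A_mn m n ! k ! c' = (if c' = c then 1 else 0)"
proof (intro allI impI)
  fix c assume "c < m + n - 2"
  then obtain k where "k < length (Acols_exp m n)" "Acols_exp m n ! k = unit_exp c"
    using unit_in_Acols_exp by (metis in_set_conv_nth)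
  then show "\<exists>k<length (A_mn m n). \<forall>c'<m + n - 2. A_mn m n ! k ! c' = (if c' = c then 1 else 0)"
    by (intro exI[of _ k]) (simp add: A_mn_def unit_exp_def)
qed

end

theorem mainTheorem12:
  fixes m n :: nat and a b :: "int list"
  assumes "m \<ge> 2" and "n \<ge> 2"
    and "length a = m + n - 2" and "length b = m + n - 2"
    and "\<forall>c < m + n - 2. a ! c \<ge> b ! c"
  shows "vpf (A_mn m n) a \<ge> vpf (A_mn m n) b"
  using vpf_mono[OF A_mn_pointed A_mn_unit_columns] assms by blast

end
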